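(* Let $(\mathcal{S},\mathcal{A},\tau,\mu_0,\gamma)$ be fixed, and fix a selection rule $g$ assigning to each nonempty $B\subseteq\mathcal{A}$ a distribution $g(B)\in\Delta(\mathcal{A})$ with support exactly $B$. For a reward function $R$, let $\pi_R(s)=g(\arg\max_a A^\star_R(s,a))$ (a maximally supportive optimal policy), let $\Delta_R$ be the distribution over trajectories obtained by drawing $S_0\sim\mu_0$ and following $\pi_R$ with transitions from $\tau$, and let $\mathfrak{S}_R$ be the set of states visited with positive probability under $\Delta_R$. Let $\mathfrak{O}_R$ be the set of functions $\mathcal{O}:\mathcal{S}\to\mathcal{P}(\mathcal{A})\setminus\{\emptyset\}$ with $\mathcal{O}(s)=\arg\max_a A^\star_R(s,a)$ for all $s\in\mathfrak{S}_R$. Then for all reward functions $R,R'$: $\Delta_R=\Delta_{R'}$ if and only if $R'$ is produced from $R$ by an optimality-preserving transformation with some $\mathcal{O}\in\mathfrak{O}_R$.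
   Context: An MDP is $(\mathcal{S},\mathcal{A},\tau,\mu_0,R,\gamma)$ with finite $\mathcal{S},\mathcal{A}$, $\tau:\mathcal{S}\times\mathcal{A}\to\Delta(\mathcal{S})$, $\mu_0\in\Delta(\mathcal{S})$, $R:\mathcal{S}\times\mathcal{A}\times\mathcal{S}\to\mathbb{R}$, $\gamma\in(0,1)$. $A^\star_R$ is the optimal advantage function for reward $R$ ($Q^\star-V^\star$ of a policy maximising $\mathbb{E}_{S_0\sim\mu_0}[V^\pi(S_0)]$). A maximally supportive optimal policy gives positive probability to all optimal actions in every state; it is assumed its action probabilities in each state depend only on the set of optimal actions there (formalised by $g$). Given $\mathcal{O}:\mathcal{S}\to\mathcal{P}(\mathcal{A})\setminus\{\emptyset\}$, $R'$ is produced from $R$ by an optimality-preserving transformation with $\mathcal{O}$ if there exists $\Psi:\mathcal{S}\to\mathbb{R}$ with $\mathbb{E}_{S'\sim\tau(s,a)}[R'(s,a,S')+\gamma\Psi(S')]\le\Psi(s)$ for all $s,a$, with equality iff $a\in\mathcal{O}(s)$. *)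

theory Defs
  imports "HOL-Probability.Probability"
begin

fun value_n :: "('s \<Rightarrow> 'a \<Rightarrow> 's pmf) \<Rightarrow> real \<Rightarrow> ('s \<Rightarrow> 'a \<Rightarrow> 's \<Rightarrow> real)
    \<Rightarrow> ('s \<Rightarrow> 'a pmf) \<Rightarrow> nat \<Rightarrow> 's \<Rightarrow> real" where
  "value_n tau \<gamma> R \<pi> 0 s = 0"
| "value_n tau \<gamma> R \<pi> (Suc n) s =
     measure_pmf.expectation (\<pi> s) (\<lambda>a.
       measure_pmf.expectation (tau s a) (\<lambda>s'. R s a s' + \<gamma> * value_n tau \<gamma> R \<pi> n s'))"

definition value_fun :: "('s \<Rightarrow> 'a \<Rightarrow> 's pmf) \<Rightarrow> real \<Rightarrow> ('s \<Rightarrow> 'a \<Rightarrow> 's \<Rightarrow> real)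
    \<Rightarrow> ('s \<Rightarrow> 'a pmf) \<Rightarrow> 's \<Rightarrow> real" where
  "value_fun tau \<gamma> R \<pi> s = lim (\<lambda>n. value_n tau \<gamma> R \<pi> n s)"

definition opt_value :: "('s \<Rightarrow> 'a \<Rightarrow> 's pmf) \<Rightarrow> real \<Rightarrow> ('s \<Rightarrow> 'a \<Rightarrow> 's \<Rightarrow> real)
    \<Rightarrow> 's \<Rightarrow> real" where
  "opt_value tau \<gamma> R s = (SUP \<pi>. value_fun tau \<gamma> R \<pi> s)"

definition opt_Q :: "('s \<Rightarrow> 'a \<Rightarrow> 's pmf) \<Rightarrow> real \<Rightarrow> ('s \<Rightarrow> 'a \<Rightarrow> 's \<Rightarrow> real)
    \<Rightarrow> 's \<Rightarrow> 'a \<Rightarrow> real" where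
  "opt_Q tau \<gamma> R s a =
     measure_pmf.expectation (tau s a) (\<lambda>s'. R s a s' + \<gamma> * opt_value tau \<gamma> R s')"

definition opt_adv :: "('s \<Rightarrow> 'a \<Rightarrow> 's pmf) \<Rightarrow> real \<Rightarrow> ('s \<Rightarrow> 'a \<Rightarrow> 's \<Rightarrow> real)
    \<Rightarrow> 's \<Rightarrow> 'a \<Rightarrow> real" where
  "opt_adv tau \<gamma> R s a = opt_Q tau \<gamma> R s a - opt_value tau \<gamma> R s"

definition opt_actions :: "('s \<Rightarrow> 'a \<Rightarrow> 's pmf) \<Rightarrow> real \<Rightarrow> ('s \<Rightarrow> 'a \<Rightarrow> 's \<Rightarrow> real)
    \<Rightarrow> 's \<Rightarrow> 'a set" where
  "opt_actions tau \<gamma> R s = {a. \<forall>b. opt_adv tau \<gamma> R s b \<le> opt_adv tau \<gamma> R s a}"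

definition selection_rule :: "('a set \<Rightarrow> 'a pmf) \<Rightarrow> bool" where
  "selection_rule g \<longleftrightarrow> (\<forall>B. B \<noteq> {} \<longrightarrow> set_pmf (g B) = B)"

definition ms_policy :: "('a set \<Rightarrow> 'a pmf) \<Rightarrow> ('s \<Rightarrow> 'a \<Rightarrow> 's pmf) \<Rightarrow> real
    \<Rightarrow> ('s \<Rightarrow> 'a \<Rightarrow> 's \<Rightarrow> real) \<Rightarrow> 's \<Rightarrow> 'a pmf" where
  "ms_policy g tau \<gamma> R s = g (opt_actions tau \<gamma> R s)"

text \<open>The trajectory distribution is represented by the family of all its
  finite-prefix marginals (which determine it uniquely).\<close>
fun traj_prefix :: "('s \<Rightarrow> 'a \<Rightarrow> 's pmf) \<Rightarrow> ('s \<Rightarrow> 'a pmf) \<Rightarrow> nat \<Rightarrow> 's pmf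
    \<Rightarrow> ('s \<times> 'a) list pmf" where
  "traj_prefix tau \<pi> 0 d = return_pmf []"
| "traj_prefix tau \<pi> (Suc n) d =
     do { s \<leftarrow> d; a \<leftarrow> \<pi> s; rest \<leftarrow> traj_prefix tau \<pi> n (tau s a);
          return_pmf ((s, a) # rest) }"

definition traj_dist :: "('a set \<Rightarrow> 'a pmf) \<Rightarrow> ('s \<Rightarrow> 'a \<Rightarrow> 's pmf) \<Rightarrow> 's pmf \<Rightarrow> real
    \<Rightarrow> ('s \<Rightarrow> 'a \<Rightarrow> 's \<Rightarrow> real) \<Rightarrow> nat \<Rightarrow> ('s \<times> 'a) list pmf" where
  "traj_dist g tau mu0 \<gamma> R n = traj_prefix tau (ms_policy g tau \<gamma> R) n mu0"

definition visited_states :: "('a set \<Rightarrow> 'a pmf) \<Rightarrow> ('s \<Rightarrow> 'a \<Rightarrow> 's pmf) \<Rightarrow> 's pmf \<Rightarrow> real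
    \<Rightarrow> ('s \<Rightarrow> 'a \<Rightarrow> 's \<Rightarrow> real) \<Rightarrow> 's set" where
  "visited_states g tau mu0 \<gamma> R =
     {s. \<exists>n. \<exists>xs \<in> set_pmf (traj_dist g tau mu0 \<gamma> R n). s \<in> fst ` set xs}"

definition admissible_O :: "('a set \<Rightarrow> 'a pmf) \<Rightarrow> ('s \<Rightarrow> 'a \<Rightarrow> 's pmf) \<Rightarrow> 's pmf \<Rightarrow> real
    \<Rightarrow> ('s \<Rightarrow> 'a \<Rightarrow> 's \<Rightarrow> real) \<Rightarrow> ('s \<Rightarrow> 'a set) set" where
  "admissible_O g tau mu0 \<gamma> R =
     {Ob. (\<forall>s. Ob s \<noteq> {}) \<and>
         (\<forall>s \<in> visited_states g tau mu0 \<gamma> R. Ob s = opt_actions tau \<gamma> R s)}"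

definition opt_preserving :: "('s \<Rightarrow> 'a \<Rightarrow> 's pmf) \<Rightarrow> real \<Rightarrow> ('s \<Rightarrow> 'a set)
    \<Rightarrow> ('s \<Rightarrow> 'a \<Rightarrow> 's \<Rightarrow> real) \<Rightarrow> ('s \<Rightarrow> 'a \<Rightarrow> 's \<Rightarrow> real) \<Rightarrow> bool" where
  "opt_preserving tau \<gamma> Ob R R' \<longleftrightarrow>
     (\<exists>\<Psi> :: 's \<Rightarrow> real. \<forall>s a.
        measure_pmf.expectation (tau s a) (\<lambda>s'. R' s a s' + \<gamma> * \<Psi> s') \<le> \<Psi> s \<and>
        (measure_pmf.expectation (tau s a) (\<lambda>s'. R' s a s' + \<gamma> * \<Psi> s') = \<Psi> s
           \<longleftrightarrow> a \<in> Ob s))"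

end

theory Submission
  imports Defs
begin

text \<open>Since \<open>g(B)\<close> has support exactly \<open>B\<close>, the maximally supportive policies of \<open>R\<close> and \<open>R'\<close>
  generate the same trajectory distribution iff their sets of optimal actions agree at every
  state visited under \<open>R\<close>: agreement there makes the two policies coincide along every
  trajectory, and conversely each action a policy may take at a visited state occurs in some
  trajectory prefix, so equal prefix distributions force equal supports.
  On the other side, the conditions on \<open>\<Psi>\<close> in an optimality-preserving transformation say
  exactly that \<open>\<Psi>\<close> solves the Bellman optimality equation for \<open>R'\<close> with greedy action sets \<open>O\<close>.
  The Bellman optimality operator is a \<open>\<gamma>\<close>-contraction in the sup norm, so \<open>\<Psi> = V\<^sup>\<star>\<^bsub>R'\<^esub>\<close>
  and \<open>O = argmax A\<^sup>\<star>\<^bsub>R'\<^esub>\<close>; hence both sides of the equivalence say that \<open>argmax A\<^sup>\<star>\<^bsub>R'\<^esub>\<close>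
  agrees with \<open>argmax A\<^sup>\<star>\<^bsub>R\<^esub>\<close> on the states visited under \<open>R\<close>.\<close>

definition sup_contraction :: "(('s \<Rightarrow> real) \<Rightarrow> 's \<Rightarrow> real) \<Rightarrow> real \<Rightarrow> bool" where
  "sup_contraction F c \<longleftrightarrow>
     (\<forall>U V B. (\<forall>s. \<bar>U s - V s\<bar> \<le> B) \<longrightarrow> (\<forall>s. \<bar>F U s - F V s\<bar> \<le> c * B))"

lemma sup_contraction_funpow_dist:
  assumes "sup_contraction F c" and "\<forall>s. \<bar>U s - V s\<bar> \<le> B"
  shows "\<bar>(F ^^ n) U s - (F ^^ n) V s\<bar> \<le> c ^ n * B"
proof (induction n arbitrary: s)
  case 0
  then show ?case using assms(2) by simp
next
  case (Suc n)
  then show ?case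
    using assms(1) unfolding sup_contraction_def by (simp add: mult.assoc)
qed

lemma sup_contraction_funpow_tendsto_fixpoint:
  fixes F :: "('s::finite \<Rightarrow> real) \<Rightarrow> 's \<Rightarrow> real"
  assumes "0 \<le> c" "c < 1" "sup_contraction F c" "F W = W"
  shows "(\<lambda>n. (F ^^ n) U s) \<longlonglongrightarrow> W s"
proof -
  define B where "B = (\<Sum>t\<in>UNIV. \<bar>U t - W t\<bar>)"
  have "\<forall>t. \<bar>U t - W t\<bar> \<le> B"
    unfolding B_def by (auto intro: member_le_sum)
  moreover have "(F ^^ n) W = W" for n
    using assms(4) by (induction n) simp_all
  ultimately have bound: "\<forall>n. norm ((F ^^ n) U s - W s) \<le> c ^ n * B"
    using sup_contraction_funpow_dist[OF assms(3), of U W B _ s] by simp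
  have "(\<lambda>n. c ^ n * B) \<longlonglongrightarrow> 0"
    using assms(1,2) by (intro tendsto_mult_left_zero LIMSEQ_power_zero) simp
  then have "(\<lambda>n. (F ^^ n) U s - W s) \<longlonglongrightarrow> 0"
    by (rule Lim_null_comparison[OF always_eventually[OF bound]])
  then show ?thesis
    by (simp only: LIM_zero_iff)
qed

lemma sup_contraction_tendsto:
  fixes F :: "('s::finite \<Rightarrow> real) \<Rightarrow> 's \<Rightarrow> real"
  assumes "sup_contraction F c" and "\<And>t. (\<lambda>n. X n t) \<longlonglongrightarrow> W t"
  shows "(\<lambda>n. F (X n) s) \<longlonglongrightarrow> F W s"
proof -
  define d where "d n = (\<Sum>t\<in>UNIV. \<bar>X n t - W t\<bar>)" for n
  have "(\<lambda>n. \<bar>X n t - W t\<bar>) \<longlonglongrightarrow> 0" for t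
    using assms(2)[of t] by (intro tendsto_rabs_zero) (simp add: LIM_zero_iff)
  then have "d \<longlonglongrightarrow> 0"
    unfolding d_def by (rule tendsto_null_sum)
  then have d_lim: "(\<lambda>n. c * d n) \<longlonglongrightarrow> 0"
    by (rule tendsto_mult_right_zero)
  have bound: "\<forall>n. norm (F (X n) s - F W s) \<le> c * d n"
  proof
    fix n
    have "\<forall>t. \<bar>X n t - W t\<bar> \<le> d n"
      unfolding d_def by (auto intro: member_le_sum)
    then show "norm (F (X n) s - F W s) \<le> c * d n"
      using assms(1) unfolding sup_contraction_def by simp
  qed
  have "(\<lambda>n. F (X n) s - F W s) \<longlonglongrightarrow> 0"
    by (rule Lim_null_comparison[OF always_eventually[OF bound] d_lim])
  then show ?thesis
    by (simp only: LIM_zero_iff)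
qed

text \<open>The iterates from \<open>0\<close> have geometrically decreasing increments, hence converge;
  the limit is fixed by continuity of \<open>F\<close>.\<close>

lemma sup_contraction_has_fixpoint:
  fixes F :: "('s::finite \<Rightarrow> real) \<Rightarrow> 's \<Rightarrow> real"
  assumes "0 \<le> c" "c < 1" "sup_contraction F c"
  shows "\<exists>W. F W = W"
proof -
  define x where "x n = (F ^^ n) (\<lambda>_. 0)" for n
  define C where "C = (\<Sum>t\<in>UNIV. \<bar>x 1 t - x 0 t\<bar>)"
  define W where "W s = x 0 s + (\<Sum>k. x (Suc k) s - x k s)" for s
  have increment: "\<bar>x (Suc n) s - x n s\<bar> \<le> c ^ n * C" for n s
  proof -
    have "\<forall>t. \<bar>F (\<lambda>_. 0) t - 0\<bar> \<le> C"
      unfolding C_def x_def by (auto intro: member_le_sum)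
    then show ?thesis
      using sup_contraction_funpow_dist[OF assms(3), of "F (\<lambda>_. 0)" "\<lambda>_. 0" C n s]
      unfolding x_def by (simp add: funpow_Suc_right del: funpow.simps)
  qed
  have "summable (\<lambda>n. c ^ n * C)"
    using assms(1,2) by (simp add: summable_mult2)
  then have "summable (\<lambda>n. x (Suc n) s - x n s)" for s
    by (rule summable_comparison_test[rotated]) (use increment in auto)
  then have "(\<lambda>n. x 0 s + (\<Sum>k<n. x (Suc k) s - x k s))
      \<longlonglongrightarrow> x 0 s + (\<Sum>k. x (Suc k) s - x k s)" for s
    by (intro tendsto_add tendsto_const summable_LIMSEQ)
  moreover have "x 0 s + (\<Sum>k<n. x (Suc k) s - x k s) = x n s" for n s
    using sum_lessThan_telescope[of "\<lambda>k. x k s" n] by simp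
  ultimately have lim: "(\<lambda>n. x n s) \<longlonglongrightarrow> W s" for s
    unfolding W_def by simp
  have "(\<lambda>n. F (x n) s) \<longlonglongrightarrow> F W s" for s
    by (rule sup_contraction_tendsto[OF assms(3) lim])
  moreover have "(\<lambda>n. F (x n) s) \<longlonglongrightarrow> W s" for s
    using LIMSEQ_Suc[OF lim[of s]] unfolding x_def by simp
  ultimately have "F W = W"
    using LIMSEQ_unique by blast
  then show ?thesis
    by blast
qed

lemma expectation_abs_diff_le:
  fixes p :: "'x::finite pmf" and f g :: "'x \<Rightarrow> real"
  assumes "\<And>x. \<bar>f x - g x\<bar> \<le> B"
  shows "\<bar>measure_pmf.expectation p f - measure_pmf.expectation p g\<bar> \<le> B"
proof -
  have "measure_pmf.expectation p f - measure_pmf.expectation p g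
      = measure_pmf.expectation p (\<lambda>x. f x - g x)"
    by (simp add: integrable_measure_pmf_finite)
  moreover have "\<bar>measure_pmf.expectation p (\<lambda>x. f x - g x)\<bar>
      \<le> measure_pmf.expectation p (\<lambda>x. \<bar>f x - g x\<bar>)"
    by (rule integral_abs_bound)
  moreover have "measure_pmf.expectation p (\<lambda>x. \<bar>f x - g x\<bar>) \<le> B"
    using assms by (intro measure_pmf.integral_le_const) (simp_all add: integrable_measure_pmf_finite)
  ultimately show ?thesis
    by linarith
qed

lemma Max_range_attained:
  fixes f :: "'a::finite \<Rightarrow> 'b::linorder"
  obtains a where "Max (range f) = f a"
proof -
  have "Max (range f) \<in> range f"
    by (rule Max_in) simp_all
  then show ?thesis
    using that by blast
qed

lemma Max_range_abs_diff_le: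
  fixes f g :: "'a::finite \<Rightarrow> real"
  assumes "\<And>a. \<bar>f a - g a\<bar> \<le> B"
  shows "\<bar>Max (range f) - Max (range g)\<bar> \<le> B"
proof -
  have one_sided: "Max (range f) \<le> Max (range g) + B"
    if "\<And>a. f a \<le> g a + B" for f g :: "'a \<Rightarrow> real"
  proof -
    obtain a where "Max (range f) = f a"
      by (rule Max_range_attained)
    moreover have "g a \<le> Max (range g)"
      by simp
    ultimately show ?thesis
      using that[of a] by linarith
  qed
  have "f a \<le> g a + B" "g a \<le> f a + B" for a
    using assms[of a] by (simp_all add: abs_le_iff)
  then have "Max (range f) \<le> Max (range g) + B" "Max (range g) \<le> Max (range f) + B"
    using one_sided[of f g] one_sided[of g f] by blast+
  then show ?thesis
    by linarith
qed

definition bellman_Q :: "('s \<Rightarrow> 'a \<Rightarrow> 's pmf) \<Rightarrow> real \<Rightarrow> ('s \<Rightarrow> 'a \<Rightarrow> 's \<Rightarrow> real)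
    \<Rightarrow> ('s \<Rightarrow> real) \<Rightarrow> 's \<Rightarrow> 'a \<Rightarrow> real" where
  "bellman_Q tau \<gamma> R V s a = measure_pmf.expectation (tau s a) (\<lambda>s'. R s a s' + \<gamma> * V s')"

definition policy_bellman :: "('s \<Rightarrow> 'a \<Rightarrow> 's pmf) \<Rightarrow> real \<Rightarrow> ('s \<Rightarrow> 'a \<Rightarrow> 's \<Rightarrow> real)
    \<Rightarrow> ('s \<Rightarrow> 'a pmf) \<Rightarrow> ('s \<Rightarrow> real) \<Rightarrow> 's \<Rightarrow> real" where
  "policy_bellman tau \<gamma> R \<pi> V s = measure_pmf.expectation (\<pi> s) (bellman_Q tau \<gamma> R V s)"

definition opt_bellman :: "('s \<Rightarrow> 'a \<Rightarrow> 's pmf) \<Rightarrow> real \<Rightarrow> ('s \<Rightarrow> 'a \<Rightarrow> 's \<Rightarrow> real)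
    \<Rightarrow> ('s \<Rightarrow> real) \<Rightarrow> 's \<Rightarrow> real" where
  "opt_bellman tau \<gamma> R V s = Max (range (bellman_Q tau \<gamma> R V s))"

lemma opt_Q_eq_bellman_Q: "opt_Q tau \<gamma> R = bellman_Q tau \<gamma> R (opt_value tau \<gamma> R)"
  by (simp add: fun_eq_iff opt_Q_def bellman_Q_def)

lemma bellman_Q_abs_diff_le:
  fixes tau :: "'s::finite \<Rightarrow> 'a \<Rightarrow> 's pmf"
  assumes "0 \<le> \<gamma>" and "\<forall>t. \<bar>U t - V t\<bar> \<le> B"
  shows "\<bar>bellman_Q tau \<gamma> R U s a - bellman_Q tau \<gamma> R V s a\<bar> \<le> \<gamma> * B"
  unfolding bellman_Q_def
proof (rule expectation_abs_diff_le)
  fix t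
  have "\<gamma> * \<bar>U t - V t\<bar> \<le> \<gamma> * B"
    using assms by (simp add: mult_left_mono)
  then show "\<bar>R s a t + \<gamma> * U t - (R s a t + \<gamma> * V t)\<bar> \<le> \<gamma> * B"
    using assms(1) by (simp add: abs_mult flip: right_diff_distrib)
qed

lemma sup_contraction_policy_bellman:
  fixes tau :: "'s::finite \<Rightarrow> 'a::finite \<Rightarrow> 's pmf"
  assumes "0 \<le> \<gamma>"
  shows "sup_contraction (policy_bellman tau \<gamma> R \<pi>) \<gamma>"
  unfolding sup_contraction_def policy_bellman_def
proof (intro allI impI)
  fix U V :: "'s \<Rightarrow> real" and B s
  assume "\<forall>t. \<bar>U t - V t\<bar> \<le> B"
  then show "\<bar>measure_pmf.expectation (\<pi> s) (bellman_Q tau \<gamma> R U s)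
      - measure_pmf.expectation (\<pi> s) (bellman_Q tau \<gamma> R V s)\<bar> \<le> \<gamma> * B"
    by (intro expectation_abs_diff_le bellman_Q_abs_diff_le assms)
qed

lemma sup_contraction_opt_bellman:
  fixes tau :: "'s::finite \<Rightarrow> 'a::finite \<Rightarrow> 's pmf"
  assumes "0 \<le> \<gamma>"
  shows "sup_contraction (opt_bellman tau \<gamma> R) \<gamma>"
  unfolding sup_contraction_def opt_bellman_def
proof (intro allI impI)
  fix U V :: "'s \<Rightarrow> real" and B s
  assume "\<forall>t. \<bar>U t - V t\<bar> \<le> B"
  then show "\<bar>Max (range (bellman_Q tau \<gamma> R U s)) - Max (range (bellman_Q tau \<gamma> R V s))\<bar>
      \<le> \<gamma> * B"
    by (intro Max_range_abs_diff_le bellman_Q_abs_diff_le assms)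
qed

lemma policy_bellman_mono:
  fixes tau :: "'s::finite \<Rightarrow> 'a::finite \<Rightarrow> 's pmf"
  assumes "0 \<le> \<gamma>" and "\<And>t. U t \<le> V t"
  shows "policy_bellman tau \<gamma> R \<pi> U s \<le> policy_bellman tau \<gamma> R \<pi> V s"
  unfolding policy_bellman_def bellman_Q_def using assms
  by (intro integral_mono) (auto intro!: mult_left_mono simp: integrable_measure_pmf_finite)

lemma policy_bellman_le_opt_bellman:
  fixes tau :: "'s \<Rightarrow> 'a::finite \<Rightarrow> 's pmf"
  shows "policy_bellman tau \<gamma> R \<pi> V s \<le> opt_bellman tau \<gamma> R V s"
  unfolding policy_bellman_def opt_bellman_def
  by (intro measure_pmf.integral_le_const) (simp_all add: integrable_measure_pmf_finite)

lemma ex_greedy_policy: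
  fixes tau :: "'s \<Rightarrow> 'a::finite \<Rightarrow> 's pmf"
  shows "\<exists>\<pi>. policy_bellman tau \<gamma> R \<pi> V = opt_bellman tau \<gamma> R V"
proof -
  have "\<exists>a. bellman_Q tau \<gamma> R V s a = opt_bellman tau \<gamma> R V s" for s
    unfolding opt_bellman_def by (metis Max_range_attained)
  then obtain f where "\<And>s. bellman_Q tau \<gamma> R V s (f s) = opt_bellman tau \<gamma> R V s"
    by metis
  then have "policy_bellman tau \<gamma> R (\<lambda>s. return_pmf (f s)) V = opt_bellman tau \<gamma> R V"
    by (simp add: fun_eq_iff policy_bellman_def)
  then show ?thesis
    by blast
qed

lemma value_n_eq_funpow: "value_n tau \<gamma> R \<pi> n = (policy_bellman tau \<gamma> R \<pi> ^^ n) (\<lambda>_. 0)"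
  by (induction n) (simp_all add: fun_eq_iff policy_bellman_def bellman_Q_def[abs_def])

context
  fixes tau :: "'s::finite \<Rightarrow> 'a::finite \<Rightarrow> 's pmf" and \<gamma> :: real
  assumes discount: "0 \<le> \<gamma>" "\<gamma> < 1"
begin

lemma value_fun_eq_fixpoint:
  assumes "policy_bellman tau \<gamma> R \<pi> V = V"
  shows "value_fun tau \<gamma> R \<pi> = V"
proof
  fix s
  have "(\<lambda>n. value_n tau \<gamma> R \<pi> n s) \<longlonglongrightarrow> V s"
    unfolding value_n_eq_funpow
    by (rule sup_contraction_funpow_tendsto_fixpoint[OF discount
          sup_contraction_policy_bellman[OF discount(1)] assms])
  then show "value_fun tau \<gamma> R \<pi> s = V s"
    unfolding value_fun_def by (rule limI)
qed

lemma value_fun_le_supersolution: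
  assumes "\<And>t. policy_bellman tau \<gamma> R \<pi> W t \<le> W t"
  shows "value_fun tau \<gamma> R \<pi> s \<le> W s"
proof -
  let ?T = "policy_bellman tau \<gamma> R \<pi>"
  have contraction: "sup_contraction ?T \<gamma>"
    by (rule sup_contraction_policy_bellman[OF discount(1)])
  obtain V where V: "?T V = V"
    using sup_contraction_has_fixpoint[OF discount contraction] by blast
  have "(?T ^^ n) W t \<le> W t" for n t
  proof (induction n arbitrary: t)
    case 0
    show ?case by simp
  next
    case (Suc n)
    have "(?T ^^ Suc n) W t \<le> ?T W t"
      using policy_bellman_mono[OF discount(1) Suc.IH] by simp
    then show ?case
      using assms[of t] by linarith
  qed
  then have "V s \<le> W s"
    using LIMSEQ_le_const2[OF sup_contraction_funpow_tendsto_fixpoint[OF discount contraction V]]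
    by blast
  then show ?thesis
    using value_fun_eq_fixpoint[OF V] by simp
qed

lemma opt_value_eq_fixpoint:
  assumes "opt_bellman tau \<gamma> R W = W"
  shows "opt_value tau \<gamma> R = W"
proof
  fix s
  obtain \<pi>\<^sub>0 where "policy_bellman tau \<gamma> R \<pi>\<^sub>0 W = W"
    using ex_greedy_policy[of tau \<gamma> R W] assms by auto
  then have "W s = value_fun tau \<gamma> R \<pi>\<^sub>0 s"
    by (simp add: value_fun_eq_fixpoint)
  moreover have "value_fun tau \<gamma> R \<pi> s \<le> W s" for \<pi>
    using policy_bellman_le_opt_bellman[of tau \<gamma> R \<pi> W] assms
    by (intro value_fun_le_supersolution) simp
  ultimately show "opt_value tau \<gamma> R s = W s"
    unfolding opt_value_def by (intro cSup_eq_maximum range_eqI) auto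
qed

lemma opt_value_eq_Max_opt_Q: "opt_value tau \<gamma> R s = Max (range (opt_Q tau \<gamma> R s))"
proof -
  obtain W where "opt_bellman tau \<gamma> R W = W"
    using sup_contraction_has_fixpoint[OF discount sup_contraction_opt_bellman[OF discount(1)]]
    by blast
  then have "opt_bellman tau \<gamma> R (opt_value tau \<gamma> R) = opt_value tau \<gamma> R"
    using opt_value_eq_fixpoint by simp
  then show ?thesis
    unfolding opt_Q_eq_bellman_Q opt_bellman_def by (simp add: fun_eq_iff)
qed

lemma opt_Q_le_opt_value: "opt_Q tau \<gamma> R s a \<le> opt_value tau \<gamma> R s"
  by (simp add: opt_value_eq_Max_opt_Q)

lemma opt_actions_eq: "opt_actions tau \<gamma> R s = {a. opt_Q tau \<gamma> R s a = opt_value tau \<gamma> R s}"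
  unfolding opt_actions_def opt_adv_def opt_value_eq_Max_opt_Q
  by (auto intro: Max_eqI[symmetric])

lemma opt_actions_nonempty: "opt_actions tau \<gamma> R s \<noteq> {}"
proof -
  obtain a where "Max (range (opt_Q tau \<gamma> R s)) = opt_Q tau \<gamma> R s a"
    by (rule Max_range_attained)
  then have "a \<in> opt_actions tau \<gamma> R s"
    unfolding opt_actions_eq opt_value_eq_Max_opt_Q by simp
  then show ?thesis
    by blast
qed

lemma opt_preserving_iff_eq_opt_actions:
  assumes "\<forall>s. Ob s \<noteq> {}"
  shows "opt_preserving tau \<gamma> Ob R R' \<longleftrightarrow> Ob = opt_actions tau \<gamma> R'"
proof
  assume "opt_preserving tau \<gamma> Ob R R'"
  then obtain \<Psi> where \<Psi>: "\<And>s a. bellman_Q tau \<gamma> R' \<Psi> s a \<le> \<Psi> s"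
      "\<And>s a. bellman_Q tau \<gamma> R' \<Psi> s a = \<Psi> s \<longleftrightarrow> a \<in> Ob s"
    unfolding opt_preserving_def bellman_Q_def by blast
  have "opt_bellman tau \<gamma> R' \<Psi> = \<Psi>"
  proof
    fix s
    obtain a where "a \<in> Ob s"
      using assms by blast
    then have "bellman_Q tau \<gamma> R' \<Psi> s a = \<Psi> s"
      using \<Psi>(2) by blast
    then show "opt_bellman tau \<gamma> R' \<Psi> s = \<Psi> s"
      unfolding opt_bellman_def using \<Psi>(1) rangeI[of "bellman_Q tau \<gamma> R' \<Psi> s" a]
      by (intro Max_eqI) auto
  qed
  then have "opt_value tau \<gamma> R' = \<Psi>"
    by (rule opt_value_eq_fixpoint)
  then have "opt_actions tau \<gamma> R' s = Ob s" for s
    using \<Psi>(2) by (simp add: opt_actions_eq opt_Q_eq_bellman_Q)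
  then show "Ob = opt_actions tau \<gamma> R'"
    by auto
next
  assume "Ob = opt_actions tau \<gamma> R'"
  then have "\<forall>s a. opt_Q tau \<gamma> R' s a \<le> opt_value tau \<gamma> R' s \<and>
      (opt_Q tau \<gamma> R' s a = opt_value tau \<gamma> R' s \<longleftrightarrow> a \<in> Ob s)"
    using opt_Q_le_opt_value by (simp add: opt_actions_eq)
  then show "opt_preserving tau \<gamma> Ob R R'"
    unfolding opt_preserving_def opt_Q_def by (rule exI[where x = "opt_value tau \<gamma> R'"])
qed

end

definition reachable_states :: "('s \<Rightarrow> 'a \<Rightarrow> 's pmf) \<Rightarrow> ('s \<Rightarrow> 'a pmf) \<Rightarrow> 's pmf \<Rightarrow> 's set" where
  "reachable_states tau \<pi> d = {s. \<exists>n. \<exists>xs \<in> set_pmf (traj_prefix tau \<pi> n d). s \<in> fst ` set xs}"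

lemma visited_states_eq_reachable_states:
  "visited_states g tau mu0 \<gamma> R = reachable_states tau (ms_policy g tau \<gamma> R) mu0"
  unfolding visited_states_def reachable_states_def traj_dist_def ..

lemma set_pmf_subset_reachable_states: "set_pmf d \<subseteq> reachable_states tau \<pi> d"
proof
  fix s
  assume "s \<in> set_pmf d"
  moreover obtain a where "a \<in> set_pmf (\<pi> s)"
    using set_pmf_not_empty by fast
  ultimately have "[(s, a)] \<in> set_pmf (traj_prefix tau \<pi> (Suc 0) d)"
    and "s \<in> fst ` set [(s, a)]"
    by auto
  then show "s \<in> reachable_states tau \<pi> d"
    unfolding reachable_states_def by blast
qed

lemma reachable_states_step:
  assumes "s \<in> set_pmf d" and "a \<in> set_pmf (\<pi> s)"
  shows "reachable_states tau \<pi> (tau s a) \<subseteq> reachable_states tau \<pi> d"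
proof
  fix t
  assume "t \<in> reachable_states tau \<pi> (tau s a)"
  then obtain n xs where "xs \<in> set_pmf (traj_prefix tau \<pi> n (tau s a))" "t \<in> fst ` set xs"
    unfolding reachable_states_def by blast
  then have "(s, a) # xs \<in> set_pmf (traj_prefix tau \<pi> (Suc n) d)"
    and "t \<in> fst ` set ((s, a) # xs)"
    using assms by auto
  then show "t \<in> reachable_states tau \<pi> d"
    unfolding reachable_states_def by blast
qed

lemma traj_prefix_cong:
  assumes "\<forall>s \<in> reachable_states tau \<pi>\<^sub>1 d. \<pi>\<^sub>1 s = \<pi>\<^sub>2 s"
  shows "traj_prefix tau \<pi>\<^sub>1 n d = traj_prefix tau \<pi>\<^sub>2 n d"
  using assms
proof (induction n arbitrary: d)
  case 0
  show ?case by simp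
next
  case (Suc n)
  have "\<pi>\<^sub>1 s = \<pi>\<^sub>2 s" if "s \<in> set_pmf d" for s
    using Suc.prems set_pmf_subset_reachable_states[of d tau "\<pi>\<^sub>1"] that by blast
  moreover have "traj_prefix tau \<pi>\<^sub>1 n (tau s a) = traj_prefix tau \<pi>\<^sub>2 n (tau s a)"
    if "s \<in> set_pmf d" "a \<in> set_pmf (\<pi>\<^sub>1 s)" for s a
    using Suc.prems reachable_states_step[where tau = tau and \<pi> = "\<pi>\<^sub>1", OF that]
    by (intro Suc.IH) blast
  ultimately show ?case
    by (simp only: traj_prefix.simps, intro bind_pmf_cong refl) auto
qed

lemma traj_prefix_action_in_policy:
  "xs \<in> set_pmf (traj_prefix tau \<pi> n d) \<Longrightarrow> (s, a) \<in> set xs \<Longrightarrow> a \<in> set_pmf (\<pi> s)"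
  by (induction n arbitrary: d xs) auto

text \<open>Along any trajectory prefix through \<open>s\<close>, every action \<open>\<pi>\<close> may take in \<open>s\<close> is realised
  by some prefix of the same length: branch off at the first visit of \<open>s\<close>.\<close>

lemma traj_prefix_realises_actions:
  assumes "xs \<in> set_pmf (traj_prefix tau \<pi> n d)" and "s \<in> fst ` set xs"
    and "a \<in> set_pmf (\<pi> s)"
  shows "\<exists>ys \<in> set_pmf (traj_prefix tau \<pi> n d). (s, a) \<in> set ys"
  using assms(1,2)
proof (induction n arbitrary: d xs)
  case 0
  then show ?case by simp
next
  case (Suc n)
  from Suc.prems(1) obtain s\<^sub>0 a\<^sub>0 rest where s\<^sub>0: "s\<^sub>0 \<in> set_pmf d"
    and a\<^sub>0: "a\<^sub>0 \<in> set_pmf (\<pi> s\<^sub>0)"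
    and rest: "rest \<in> set_pmf (traj_prefix tau \<pi> n (tau s\<^sub>0 a\<^sub>0))"
    and xs: "xs = (s\<^sub>0, a\<^sub>0) # rest"
    by auto
  show ?case
  proof (cases "s = s\<^sub>0")
    case True
    obtain r where "r \<in> set_pmf (traj_prefix tau \<pi> n (tau s a))"
      using set_pmf_not_empty by fast
    then have "(s, a) # r \<in> set_pmf (traj_prefix tau \<pi> (Suc n) d)"
      using s\<^sub>0 assms(3) True by auto
    then show ?thesis
      by force
  next
    case False
    then have "s \<in> fst ` set rest"
      using Suc.prems(2) xs by auto
    then obtain ys where "ys \<in> set_pmf (traj_prefix tau \<pi> n (tau s\<^sub>0 a\<^sub>0))" "(s, a) \<in> set ys"
      using Suc.IH[OF rest] by blast
    moreover from this(1) have "(s\<^sub>0, a\<^sub>0) # ys \<in> set_pmf (traj_prefix tau \<pi> (Suc n) d)"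
      using s\<^sub>0 a\<^sub>0 by auto
    ultimately show ?thesis
      by force
  qed
qed

lemma set_pmf_eq_if_traj_prefix_eq:
  assumes "\<And>n. traj_prefix tau \<pi>\<^sub>1 n d = traj_prefix tau \<pi>\<^sub>2 n d"
    and "s \<in> reachable_states tau \<pi>\<^sub>1 d"
  shows "set_pmf (\<pi>\<^sub>1 s) = set_pmf (\<pi>\<^sub>2 s)"
proof -
  obtain n xs where xs: "xs \<in> set_pmf (traj_prefix tau \<pi>\<^sub>1 n d)" and s: "s \<in> fst ` set xs"
    using assms(2) unfolding reachable_states_def by blast
  have support: "set_pmf (\<pi> s) = {a. \<exists>ys \<in> set_pmf (traj_prefix tau \<pi> n d). (s, a) \<in> set ys}"
    if "xs \<in> set_pmf (traj_prefix tau \<pi> n d)" for \<pi>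
    using traj_prefix_realises_actions[OF that s] traj_prefix_action_in_policy[of _ tau \<pi> n d s]
    by blast
  have "xs \<in> set_pmf (traj_prefix tau \<pi>\<^sub>2 n d)"
    using xs assms(1) by simp
  then show ?thesis
    using support[OF xs] support[of "\<pi>\<^sub>2"] assms(1) by simp
qed

lemma set_pmf_ms_policy:
  fixes tau :: "'s::finite \<Rightarrow> 'a::finite \<Rightarrow> 's pmf"
  assumes "selection_rule g" and "0 \<le> \<gamma>" "\<gamma> < 1"
  shows "set_pmf (ms_policy g tau \<gamma> R s) = opt_actions tau \<gamma> R s"
  using assms(1) opt_actions_nonempty[OF assms(2,3), of tau R s]
  unfolding selection_rule_def ms_policy_def by simp

lemma traj_dist_eq_iff:
  fixes tau :: "'s::finite \<Rightarrow> 'a::finite \<Rightarrow> 's pmf"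
  assumes "selection_rule g" and "0 \<le> \<gamma>" "\<gamma> < 1"
  shows "traj_dist g tau mu0 \<gamma> R = traj_dist g tau mu0 \<gamma> R' \<longleftrightarrow>
    (\<forall>s \<in> visited_states g tau mu0 \<gamma> R. opt_actions tau \<gamma> R' s = opt_actions tau \<gamma> R s)"
  unfolding visited_states_eq_reachable_states
proof
  assume eq: "traj_dist g tau mu0 \<gamma> R = traj_dist g tau mu0 \<gamma> R'"
  have prefix_eq: "traj_prefix tau (ms_policy g tau \<gamma> R) n mu0
      = traj_prefix tau (ms_policy g tau \<gamma> R') n mu0" for n
    using fun_cong[OF eq, of n] unfolding traj_dist_def .
  show "\<forall>s \<in> reachable_states tau (ms_policy g tau \<gamma> R) mu0.
      opt_actions tau \<gamma> R' s = opt_actions tau \<gamma> R s"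
  proof
    fix s
    assume "s \<in> reachable_states tau (ms_policy g tau \<gamma> R) mu0"
    then have "set_pmf (ms_policy g tau \<gamma> R s) = set_pmf (ms_policy g tau \<gamma> R' s)"
      by (rule set_pmf_eq_if_traj_prefix_eq[OF prefix_eq])
    then show "opt_actions tau \<gamma> R' s = opt_actions tau \<gamma> R s"
      by (simp add: set_pmf_ms_policy[OF assms])
  qed
next
  assume "\<forall>s \<in> reachable_states tau (ms_policy g tau \<gamma> R) mu0.
      opt_actions tau \<gamma> R' s = opt_actions tau \<gamma> R s"
  then have "\<forall>s \<in> reachable_states tau (ms_policy g tau \<gamma> R) mu0.
      ms_policy g tau \<gamma> R s = ms_policy g tau \<gamma> R' s"
    by (simp add: ms_policy_def)
  then show "traj_dist g tau mu0 \<gamma> R = traj_dist g tau mu0 \<gamma> R'"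
    unfolding traj_dist_def by (auto intro!: traj_prefix_cong)
qed

lemma ex_admissible_opt_preserving_iff:
  fixes tau :: "'s::finite \<Rightarrow> 'a::finite \<Rightarrow> 's pmf"
  assumes "0 \<le> \<gamma>" "\<gamma> < 1"
  shows "(\<exists>Ob \<in> admissible_O g tau mu0 \<gamma> R. opt_preserving tau \<gamma> Ob R R') \<longleftrightarrow>
    opt_actions tau \<gamma> R' \<in> admissible_O g tau mu0 \<gamma> R"
proof
  assume "\<exists>Ob \<in> admissible_O g tau mu0 \<gamma> R. opt_preserving tau \<gamma> Ob R R'"
  then obtain Ob where Ob: "Ob \<in> admissible_O g tau mu0 \<gamma> R" "opt_preserving tau \<gamma> Ob R R'"
    by blast
  then have "Ob = opt_actions tau \<gamma> R'"
    using opt_preserving_iff_eq_opt_actions[OF assms, of Ob] unfolding admissible_O_def by simp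
  then show "opt_actions tau \<gamma> R' \<in> admissible_O g tau mu0 \<gamma> R"
    using Ob(1) by simp
next
  assume "opt_actions tau \<gamma> R' \<in> admissible_O g tau mu0 \<gamma> R"
  moreover have "opt_preserving tau \<gamma> (opt_actions tau \<gamma> R') R R'"
    using opt_preserving_iff_eq_opt_actions[OF assms] opt_actions_nonempty[OF assms, of tau R']
    by blast
  ultimately show "\<exists>Ob \<in> admissible_O g tau mu0 \<gamma> R. opt_preserving tau \<gamma> Ob R R'"
    by blast
qed

theorem theorem3p8:
  fixes tau :: "'s::finite \<Rightarrow> 'a::finite \<Rightarrow> 's pmf"
    and mu0 :: "'s pmf"
    and \<gamma> :: real
    and g :: "'a set \<Rightarrow> 'a pmf"
    and R R' :: "'s \<Rightarrow> 'a \<Rightarrow> 's \<Rightarrow> real"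
  assumes "0 < \<gamma>" and "\<gamma> < 1"
    and "selection_rule g"
  shows "traj_dist g tau mu0 \<gamma> R = traj_dist g tau mu0 \<gamma> R' \<longleftrightarrow>
         (\<exists>Ob \<in> admissible_O g tau mu0 \<gamma> R. opt_preserving tau \<gamma> Ob R R')"
proof -
  have discount: "0 \<le> \<gamma>" "\<gamma> < 1"
    using assms(1,2) by simp_all
  have "traj_dist g tau mu0 \<gamma> R = traj_dist g tau mu0 \<gamma> R' \<longleftrightarrow>
      (\<forall>s \<in> visited_states g tau mu0 \<gamma> R. opt_actions tau \<gamma> R' s = opt_actions tau \<gamma> R s)"
    by (rule traj_dist_eq_iff[OF assms(3) discount])
  also have "\<dots> \<longleftrightarrow> opt_actions tau \<gamma> R' \<in> admissible_O g tau mu0 \<gamma> R"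
    using opt_actions_nonempty[OF discount, of tau R'] unfolding admissible_O_def by blast
  also have "\<dots> \<longleftrightarrow> (\<exists>Ob \<in> admissible_O g tau mu0 \<gamma> R. opt_preserving tau \<gamma> Ob R R')"
    by (rule ex_admissible_opt_preserving_iff[OF discount, symmetric])
  finally show ?thesis .
qed

end
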